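(* Let $\alpha:X\to P(A\times X+1)$ be a discrete probabilistic transition system and let $\tilde\alpha^\#=\langle\tilde\alpha^\#_1,\tilde\alpha^\#_*,a\mapsto\tau_a\rangle:DX\to \mathbb I\times\mathbb I\times(DX)^A$ be $$\tilde\alpha^\#_1(u)=\sum_{x\in X}u(x)\sum_{z\in A\times X+1}\alpha(x)(z),\quad \tilde\alpha^\#_*(u)=\sum_{x\in X}u(x)\alpha(x)( * ),\quad \tau_a(u)(y)=\sum_{x\in X}u(x)\alpha(x)(a,y).$$ Then there is a unique map $[\![-]\!]:DX\to\mathcal M(A^\infty)$ such that for all $u\in DX$, $a\in A$: $[\![u]\!](A^\infty)=\tilde\alpha^\#_1(u)$, $[\![u]\!](\{\varepsilon\})=\tilde\alpha^\#_*(u)$, and $[\![u]\!]_a=[\![\tau_a(u)]\!]$ (i.e. $[\![-]\!]$ is an $F$-coalgebra morphism from $\tilde\alpha^\#$ to $\Pi$). Moreover, writing $\langle\!\langle x\rangle\!\rangle=[\![\delta_x]\!]$, for every $u\in DX$, $$[\![u]\!]=\sum_{x\in X}u(x)\,\langle\!\langle x\rangle\!\rangle.$$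
   Context: $X$ is a set, $A$ a finite alphabet, $1=\{*\}$, $\mathbb I=[0,1]$. $PY$ (resp. $DY$) is the set of finitely supported functions $u:Y\to\mathbb I$ with $\sum_y u(y)=1$ (resp. $\le1$). $\delta_x\in DX$ is the point mass at $x$. $A^\infty=A^*\cup A^\omega$ (finite and infinite words, empty word $\varepsilon$) with $\sigma$-algebra generated by $\{\emptyset\}\cup\{\{w\}\mid w\in A^*\}\cup\{wA^\infty\mid w\in A^*\}$, $wS=\{wv\mid v\in S\}$. $\mathcal M(A^\infty)$ is the set of sub-probability measures on $A^\infty$; for $m\in\mathcal M(A^\infty)$ and $a\in A$, $m_a(S)=m(aS)$. The coalgebra $\Pi:\mathcal M(A^\infty)\to\mathbb I\times\mathbb I\times\mathcal M(A^\infty)^A$ is $\Pi(m)=\langle m(A^\infty),m(\{\varepsilon\}),a\mapsto m_a\rangle$. *)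

theory Defs
  imports "HOL-Probability.Probability"
begin

definition supp :: "('y \<Rightarrow> real) \<Rightarrow> 'y set" where
  "supp u = {y. u y \<noteq> 0}"

definition PD :: "('y \<Rightarrow> real) set" where
  "PD = {u. finite (supp u) \<and> (\<forall>y. 0 \<le> u y \<and> u y \<le> 1) \<and> sum u (supp u) = 1}"

definition DD :: "('y \<Rightarrow> real) set" where
  "DD = {u. finite (supp u) \<and> (\<forall>y. 0 \<le> u y \<and> u y \<le> 1) \<and> sum u (supp u) \<le> 1}"

definition point_mass :: "'y \<Rightarrow> 'y \<Rightarrow> real" where
  "point_mass x = (\<lambda>y. if y = x then 1 else 0)"

text \<open>A word in A^\<infinity> is encoded as a function nat \<Rightarrow> 'a option which, once
  undefined, stays undefined: finite words are those with some undefined position.\<close>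
definition winf :: "(nat \<Rightarrow> 'a option) set" where
  "winf = {w. \<forall>n. w n = None \<longrightarrow> w (Suc n) = None}"

definition of_list :: "'a list \<Rightarrow> nat \<Rightarrow> 'a option" where
  "of_list xs = (\<lambda>n. if n < length xs then Some (xs ! n) else None)"

definition eps :: "nat \<Rightarrow> 'a option" where
  "eps = of_list []"

definition wapp :: "'a list \<Rightarrow> (nat \<Rightarrow> 'a option) \<Rightarrow> nat \<Rightarrow> 'a option" where
  "wapp xs v = (\<lambda>n. if n < length xs then Some (xs ! n) else v (n - length xs))"

definition wgen :: "(nat \<Rightarrow> 'a option) set set" where
  "wgen = {{}} \<union> {{of_list w} | w. True} \<union> {wapp w ` winf | w. True}"

definition Ainf :: "(nat \<Rightarrow> 'a option) measure" where
  "Ainf = sigma winf wgen"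

definition Msub :: "(nat \<Rightarrow> 'a option) measure set" where
  "Msub = {m. sets m = sets Ainf \<and> subprob_space m}"

definition alpha1 :: "('x \<Rightarrow> ('a \<times> 'x) option \<Rightarrow> real) \<Rightarrow> ('x \<Rightarrow> real) \<Rightarrow> real" where
  "alpha1 \<alpha> u = (\<Sum>x\<in>supp u. u x * (\<Sum>z\<in>supp (\<alpha> x). \<alpha> x z))"

definition alphastar :: "('x \<Rightarrow> ('a \<times> 'x) option \<Rightarrow> real) \<Rightarrow> ('x \<Rightarrow> real) \<Rightarrow> real" where
  "alphastar \<alpha> u = (\<Sum>x\<in>supp u. u x * \<alpha> x None)"

definition tau :: "('x \<Rightarrow> ('a \<times> 'x) option \<Rightarrow> real) \<Rightarrow> 'a \<Rightarrow> ('x \<Rightarrow> real) \<Rightarrow> 'x \<Rightarrow> real" where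
  "tau \<alpha> a u = (\<lambda>y. \<Sum>x\<in>supp u. u x * \<alpha> x (Some (a, y)))"

definition is_morph :: "('x \<Rightarrow> ('a \<times> 'x) option \<Rightarrow> real) \<Rightarrow> (('x \<Rightarrow> real) \<Rightarrow> (nat \<Rightarrow> 'a option) measure) \<Rightarrow> bool" where
  "is_morph \<alpha> sem \<longleftrightarrow> (\<forall>u\<in>DD.
      sem u \<in> Msub \<and>
      emeasure (sem u) winf = ennreal (alpha1 \<alpha> u) \<and>
      emeasure (sem u) {eps} = ennreal (alphastar \<alpha> u) \<and>
      (\<forall>a. \<forall>S\<in>sets Ainf. emeasure (sem u) (wapp [a] ` S) = emeasure (sem (tau \<alpha> a u)) S))"

end

theory Submission
  imports Defs
begin

text \<open>For every time step, draw independently one successor for every state according to \<open>\<alpha>\<close>;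
  this is a stream of i.i.d. samples from the product of the distributions \<open>\<alpha> x\<close>. Starting in
  \<open>x\<close> and following the sampled successors produces a random word in \<open>A\<^sup>\<infinity>\<close>, whose distribution
  is \<open>\<langle>\<langle>x\<rangle>\<rangle>\<close>, and \<open>\<lbrakk>u\<rbrakk>\<close> is the \<open>u\<close>-mixture of these distributions. Conditioning on the first
  step (the first sample is independent of the rest of the stream) shows that this map is a
  coalgebra morphism. Conversely, the morphism equations determine the measure of every cylinder
  \<open>wA\<^sup>\<infinity>\<close> and every singleton \<open>{w}\<close> by induction on \<open>w\<close>, and these sets form an
  intersection-stable generator of the \<open>\<sigma>\<close>-algebra, which gives uniqueness.\<close>

section \<open>The measurable space of finite and infinite words\<close>

lemma of_list_in_winf [simp]: "of_list w \<in> winf"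
  by (auto simp: winf_def of_list_def)

lemma wapp_in_winf [simp]: "v \<in> winf \<Longrightarrow> wapp w v \<in> winf"
  by (auto simp: winf_def wapp_def Suc_diff_le)

lemma wgen_subset_Pow: "wgen \<subseteq> Pow winf"
  by (auto simp: wgen_def)

lemma space_Ainf [simp]: "space Ainf = winf"
  unfolding Ainf_def by (rule space_measure_of[OF wgen_subset_Pow])

lemma sets_Ainf: "sets Ainf = sigma_sets winf wgen"
  unfolding Ainf_def by (rule sets_measure_of[OF wgen_subset_Pow])

lemma wapp_Nil [simp]: "wapp [] v = v"
  by (simp add: wapp_def)

lemma wapp_Cons: "wapp (a # w) v = wapp [a] (wapp w v)"
  by (rule ext) (auto simp: wapp_def nth_Cons split: nat.splits)

lemma of_list_Cons: "of_list (a # w) = wapp [a] (of_list w)"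
  by (rule ext) (auto simp: wapp_def of_list_def nth_Cons split: nat.splits)

lemma wapp_single_in_image_iff: "wapp [a] v \<in> wapp [b] ` S \<longleftrightarrow> a = b \<and> v \<in> S"
proof
  assume "wapp [a] v \<in> wapp [b] ` S"
  then obtain v' where "v' \<in> S" and eq: "\<And>n. wapp [a] v n = wapp [b] v' n" by auto
  from eq[of 0] have "a = b" by (simp add: wapp_def)
  moreover have "v = v'" using eq[of "Suc n" for n] by (auto simp: wapp_def)
  ultimately show "a = b \<and> v \<in> S" using \<open>v' \<in> S\<close> by simp
qed auto

lemma inj_wapp_single: "inj (wapp [a])"
proof (rule injI)
  fix v w assume "wapp [a] v = wapp [a] w"
  then have "wapp [a] v \<in> wapp [a] ` {w}" by simp
  then show "v = w" unfolding wapp_single_in_image_iff by simp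
qed

lemma wapp_single_neq_eps: "wapp [a] v \<noteq> eps"
proof
  assume "wapp [a] v = eps"
  then have "wapp [a] v 0 = eps 0" by simp
  then show False by (simp add: wapp_def eps_def of_list_def)
qed

lemma in_cylinder_iff:
  assumes "v \<in> winf"
  shows "v \<in> wapp w ` winf \<longleftrightarrow> (\<forall>i<length w. v i = Some (w ! i))"
proof
  assume prefix: "\<forall>i<length w. v i = Some (w ! i)"
  have "(\<lambda>n. v (n + length w)) \<in> winf" using assms by (auto simp: winf_def)
  moreover have "v = wapp w (\<lambda>n. v (n + length w))"
    using prefix by (auto simp: wapp_def)
  ultimately show "v \<in> wapp w ` winf" by blast
qed (auto simp: wapp_def)

lemma eq_of_list_iff:
  assumes "v \<in> winf"
  shows "v = of_list w \<longleftrightarrow> (\<forall>i\<le>length w. v i = of_list w i)"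
proof
  assume prefix: "\<forall>i\<le>length w. v i = of_list w i"
  have tail: "v (length w + k) = None" for k
  proof (induction k)
    case 0 then show ?case using prefix by (simp add: of_list_def)
  next
    case (Suc k) then show ?case using assms by (auto simp: winf_def)
  qed
  have "v n = of_list w n" for n
  proof (cases "n \<le> length w")
    case False
    then show ?thesis using tail[of "n - length w"] by (simp add: of_list_def)
  qed (use prefix in auto)
  then show "v = of_list w" by auto
qed auto

lemma cylinder_Int_cylinder:
  assumes "length v \<le> length w"
  shows "wapp v ` winf \<inter> wapp w ` winf =
    (if \<forall>i<length v. v ! i = w ! i then wapp w ` winf else {})"
proof -
  have "z \<in> wapp v ` winf \<inter> wapp w ` winf \<longleftrightarrow>
      (\<forall>i<length v. v ! i = w ! i) \<and> z \<in> wapp w ` winf" for z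
  proof (cases "z \<in> winf")
    case True
    show ?thesis
      unfolding Int_iff in_cylinder_iff[OF True] using assms by force
  qed auto
  then show ?thesis by auto
qed

lemma wgenE:
  assumes "G \<in> wgen"
  obtains "G = {}" | w where "G = {of_list w}" | w where "G = wapp w ` winf"
  using assms unfolding wgen_def by blast

lemma Int_stable_wgen: "Int_stable (wgen :: (nat \<Rightarrow> 'a option) set set)"
proof (rule Int_stableI)
  have singleton_Int: "{a} \<inter> Z \<in> wgen" if "{a} \<in> wgen" for a Z
    using that by (cases "a \<in> Z") (auto simp: wgen_def)
  have cylinders_Int: "wapp v ` winf \<inter> wapp w ` winf \<in> wgen" for v w
    using cylinder_Int_cylinder[of v w] cylinder_Int_cylinder[of w v]
    by (cases "length v \<le> length w") (auto simp: wgen_def Int_commute)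
  fix X Y :: "(nat \<Rightarrow> 'a option) set" assume "X \<in> wgen" "Y \<in> wgen"
  then consider "X = {} \<or> Y = {}" | a where "X = {a} \<or> Y = {a}" "{a} \<in> wgen"
    | v w where "X = wapp v ` winf" "Y = wapp w ` winf"
    unfolding wgen_def by blast
  then show "X \<inter> Y \<in> wgen"
  proof cases
    case 1 then show ?thesis by (auto simp: wgen_def)
  next
    case (2 a) then show ?thesis using singleton_Int[of a] by (metis Int_commute)
  next
    case (3 v w) then show ?thesis using cylinders_Int by simp
  qed
qed

lemma cylinder_in_sets: "wapp w ` winf \<in> sets Ainf"
  unfolding sets_Ainf by (rule sigma_sets.Basic) (auto simp: wgen_def)

lemma singleton_in_sets: "{of_list w} \<in> sets Ainf"
  unfolding sets_Ainf by (rule sigma_sets.Basic) (auto simp: wgen_def)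

lemma winf_in_sets: "winf \<in> sets Ainf"
  using sets.top[of Ainf] by simp

lemma eps_in_sets: "{eps} \<in> sets Ainf"
  unfolding eps_def by (rule singleton_in_sets)

lemma wapp_single_image_in_sets:
  assumes "S \<in> sets Ainf"
  shows "wapp [a] ` S \<in> sets Ainf"
  using assms unfolding sets_Ainf
proof (induction rule: sigma_sets.induct)
  case (Basic G)
  then show ?case
  proof (cases rule: wgenE)
    case 1 then show ?thesis by (simp add: sigma_sets.Empty)
  next
    case (2 w)
    then have "wapp [a] ` G = {of_list (a # w)}" by (simp add: of_list_Cons)
    then show ?thesis by (auto intro!: sigma_sets.Basic simp: wgen_def)
  next
    case (3 w)
    then have "wapp [a] ` G = wapp (a # w) ` winf" by (auto simp: image_image wapp_Cons[of a w])
    then show ?thesis by (auto intro!: sigma_sets.Basic simp: wgen_def)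
  qed
next
  case (Compl S)
  have "wapp [a] ` (winf - S) = wapp [a] ` winf - wapp [a] ` S"
    by (rule image_set_diff[OF inj_wapp_single])
  also have "\<dots> \<in> sets Ainf"
    using Compl.IH cylinder_in_sets[of "[a]"] by (intro sets.Diff) (auto simp: sets_Ainf)
  finally show ?case by (simp add: sets_Ainf)
next
  case (Union A)
  have "wapp [a] ` (\<Union>i. A i) = (\<Union>i. wapp [a] ` A i)" by blast
  then show ?case using Union.IH by (simp add: sigma_sets.Union)
qed (simp add: sigma_sets.Empty)

lemma wapp_image_in_sets: "S \<in> sets Ainf \<Longrightarrow> wapp w ` S \<in> sets Ainf"
proof (induction w)
  case (Cons a w)
  have "wapp (a # w) ` S = wapp [a] ` wapp w ` S"
    by (auto simp: image_image wapp_Cons[of a w])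
  with Cons show ?case by (simp add: wapp_single_image_in_sets)
qed simp

lemma of_list_eq_wapp_eps: "{of_list w} = wapp w ` {eps}"
proof (induction w)
  case (Cons a w)
  then show ?case by (simp add: of_list_Cons image_image wapp_Cons[of a w])
qed (simp add: eps_def)

lemma Ainf_measure_eqI:
  fixes M N :: "(nat \<Rightarrow> 'a option) measure"
  assumes sets: "sets M = sets Ainf" "sets N = sets Ainf"
    and cylinder: "\<And>w. emeasure M (wapp w ` winf) = emeasure N (wapp w ` winf)"
    and singleton: "\<And>w. emeasure M {of_list w} = emeasure N {of_list w}"
    and finite: "emeasure M winf \<noteq> \<infinity>"
  shows "M = N"
proof (rule measure_eqI_generator_eq[OF Int_stable_wgen wgen_subset_Pow, where A = "\<lambda>_. winf"])
  fix X :: "(nat \<Rightarrow> 'a option) set" assume "X \<in> wgen"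
  then show "emeasure M X = emeasure N X"
    by (cases rule: wgenE) (use cylinder singleton in auto)
next
  have "wapp [] ` winf \<in> wgen" unfolding wgen_def by blast
  then show "range (\<lambda>_. winf) \<subseteq> wgen" by simp
qed (use sets finite in \<open>auto simp: sets_Ainf\<close>)

section \<open>Probabilistic transition systems\<close>

lemma DD_finite_supp: "u \<in> DD \<Longrightarrow> finite (supp u)"
  by (simp add: DD_def)

lemma DD_nonneg: "u \<in> DD \<Longrightarrow> 0 \<le> u x"
  by (simp add: DD_def)

lemma DD_sum_le_1: "u \<in> DD \<Longrightarrow> sum u (supp u) \<le> 1"
  by (simp add: DD_def)

lemma in_supp_iff [simp]: "y \<in> supp u \<longleftrightarrow> u y \<noteq> 0"
  by (simp add: supp_def)

locale prob_transition_system =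
  fixes \<alpha> :: "'x \<Rightarrow> ('a \<times> 'x) option \<Rightarrow> real"
  assumes transition_PD: "\<alpha> x \<in> PD"
begin

lemma transition_nonneg: "0 \<le> \<alpha> x z"
  using transition_PD by (auto simp: PD_def)

lemma transition_le_1: "\<alpha> x z \<le> 1"
  using transition_PD by (auto simp: PD_def)

lemma finite_supp_transition: "finite (supp (\<alpha> x))"
  using transition_PD by (auto simp: PD_def)

lemma sum_transition: "sum (\<alpha> x) (supp (\<alpha> x)) = 1"
  using transition_PD by (auto simp: PD_def)

lemma sum_transition_Some_le_1:
  assumes "finite V"
  shows "(\<Sum>y\<in>V. \<alpha> x (Some (a, y))) \<le> 1"
proof -
  let ?I = "(\<lambda>y. Some (a, y)) ` V"
  have "(\<Sum>y\<in>V. \<alpha> x (Some (a, y))) = (\<Sum>z\<in>?I. \<alpha> x z)"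
    by (subst sum.reindex) (auto simp: inj_on_def)
  also have "\<dots> \<le> (\<Sum>z\<in>?I \<union> supp (\<alpha> x). \<alpha> x z)"
    by (rule sum_mono2) (auto simp: assms finite_supp_transition transition_nonneg)
  also have "\<dots> = (\<Sum>z\<in>supp (\<alpha> x). \<alpha> x z)"
    by (rule sum.mono_neutral_right) (auto simp: assms finite_supp_transition)
  finally show ?thesis by (simp add: sum_transition)
qed

definition successors :: "'a \<Rightarrow> ('x \<Rightarrow> real) \<Rightarrow> 'x set" where
  "successors a u = (\<Union>x\<in>supp u. (\<lambda>y. Some (a, y)) -` supp (\<alpha> x))"

lemma finite_successors: "finite (supp u) \<Longrightarrow> finite (successors a u)"
  unfolding successors_def
  by (intro finite_UN_I finite_vimageI finite_supp_transition) (auto simp: inj_def)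

lemma supp_tau_subset: "supp (tau \<alpha> a u) \<subseteq> successors a u"
proof
  fix y assume "y \<in> supp (tau \<alpha> a u)"
  then have "(\<Sum>x\<in>supp u. u x * \<alpha> x (Some (a, y))) \<noteq> 0" by (simp add: tau_def)
  then obtain x where "x \<in> supp u" "u x * \<alpha> x (Some (a, y)) \<noteq> 0"
    by (meson sum.neutral)
  then show "y \<in> successors a u" by (auto simp: successors_def)
qed

lemma ennreal_tau:
  assumes "u \<in> DD"
  shows "ennreal (tau \<alpha> a u y) = (\<Sum>x\<in>supp u. ennreal (u x) * ennreal (\<alpha> x (Some (a, y))))"
  unfolding tau_def using assms
  by (subst sum_ennreal[symmetric]) (auto simp: ennreal_mult DD_nonneg transition_nonneg)

lemma tau_DD:
  assumes u: "u \<in> DD"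
  shows "tau \<alpha> a u \<in> DD"
proof -
  have finite: "finite (supp (tau \<alpha> a u))"
    by (rule finite_subset[OF supp_tau_subset finite_successors[OF DD_finite_supp[OF u]]])
  have "sum (tau \<alpha> a u) (supp (tau \<alpha> a u)) = sum (tau \<alpha> a u) (successors a u)"
    by (rule sum.mono_neutral_left)
      (use finite_successors[OF DD_finite_supp[OF u]] supp_tau_subset in auto)
  also have "\<dots> = (\<Sum>x\<in>supp u. u x * (\<Sum>y\<in>successors a u. \<alpha> x (Some (a, y))))"
    unfolding tau_def by (subst sum.swap) (simp add: sum_distrib_left)
  also have "\<dots> \<le> (\<Sum>x\<in>supp u. u x * 1)"
    using u by (intro sum_mono mult_left_mono sum_transition_Some_le_1 finite_successors
        DD_finite_supp DD_nonneg)
  finally have sum_le_1: "sum (tau \<alpha> a u) (supp (tau \<alpha> a u)) \<le> 1"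
    using DD_sum_le_1[OF u] by simp
  have le_1: "tau \<alpha> a u y \<le> 1" for y
  proof -
    have "tau \<alpha> a u y \<le> (\<Sum>x\<in>supp u. u x * 1)"
      unfolding tau_def using u by (intro sum_mono mult_left_mono transition_le_1 DD_nonneg)
    then show ?thesis using DD_sum_le_1[OF u] by simp
  qed
  have nonneg: "0 \<le> tau \<alpha> a u y" for y
    unfolding tau_def using u by (intro sum_nonneg mult_nonneg_nonneg DD_nonneg transition_nonneg)
  show ?thesis
    unfolding DD_def using finite sum_le_1 le_1 nonneg by auto
qed

subsection \<open>Uniqueness\<close>

lemma is_morph_wapp_single:
  assumes "is_morph \<alpha> sem" "u \<in> DD" "S \<in> sets Ainf"
  shows "emeasure (sem u) (wapp [a] ` S) = emeasure (sem (tau \<alpha> a u)) S"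
  using assms unfolding is_morph_def by blast

lemma morphism_unique:
  assumes m1: "is_morph \<alpha> sem1" and m2: "is_morph \<alpha> sem2" and u: "u \<in> DD"
  shows "sem1 u = sem2 u"
proof -
  have prefixed: "\<forall>u\<in>DD. emeasure (sem1 u) (wapp w ` S) = emeasure (sem2 u) (wapp w ` S)"
    if S: "S \<in> sets Ainf" and base: "\<forall>u\<in>DD. emeasure (sem1 u) S = emeasure (sem2 u) S" for w S
  proof (induction w)
    case Nil then show ?case using base by simp
  next
    case (Cons a w)
    have "wapp (a # w) ` S = wapp [a] ` wapp w ` S"
      by (auto simp: image_image wapp_Cons[of a w])
    with Cons.IH show ?case
      using is_morph_wapp_single[OF m1] is_morph_wapp_single[OF m2] wapp_image_in_sets[OF S] tau_DD
      by simp
  qed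
  have "\<forall>u\<in>DD. emeasure (sem1 u) winf = emeasure (sem2 u) winf"
    and "\<forall>u\<in>DD. emeasure (sem1 u) {eps} = emeasure (sem2 u) {eps}"
    using m1 m2 by (simp_all add: is_morph_def)
  from prefixed[OF winf_in_sets this(1)] prefixed[OF eps_in_sets this(2)]
  show ?thesis
    using m1 m2 u by (intro Ainf_measure_eqI) (auto simp: is_morph_def Msub_def of_list_eq_wapp_eps)
qed

subsection \<open>Traces of random runs\<close>

definition step :: "'x \<Rightarrow> ('a \<times> 'x) option pmf" where
  "step x = embed_pmf (\<alpha> x)"

text \<open>Choices outside the support have probability zero; redirecting them into the finite
  support makes the traces measurable without any countability assumption on the states.\<close>

definition choice :: "'x \<Rightarrow> ('a \<times> 'x) option \<Rightarrow> ('a \<times> 'x) option" where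
  "choice x z = (if z \<in> supp (\<alpha> x) then z else (SOME z. z \<in> supp (\<alpha> x)))"

definition choices :: "('x \<Rightarrow> ('a \<times> 'x) option) measure" where
  "choices = PiM UNIV (\<lambda>x. measure_pmf (step x))"

definition runs :: "('x \<Rightarrow> ('a \<times> 'x) option) stream measure" where
  "runs = stream_space choices"

primrec trace_letter :: "nat \<Rightarrow> 'x \<Rightarrow> ('x \<Rightarrow> ('a \<times> 'x) option) stream \<Rightarrow> 'a option" where
  "trace_letter 0 x \<omega> = map_option fst (choice x (shd \<omega> x))"
| "trace_letter (Suc n) x \<omega> =
    (case choice x (shd \<omega> x) of None \<Rightarrow> None | Some (a, y) \<Rightarrow> trace_letter n y (stl \<omega>))"

definition trace_word :: "'x \<Rightarrow> ('x \<Rightarrow> ('a \<times> 'x) option) stream \<Rightarrow> nat \<Rightarrow> 'a option" where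
  "trace_word x \<omega> = (\<lambda>n. trace_letter n x \<omega>)"

definition continuation :: "('a \<times> 'x) option \<Rightarrow> ('x \<Rightarrow> ('a \<times> 'x) option) stream \<Rightarrow> nat \<Rightarrow> 'a option" where
  "continuation z \<omega> = (case z of None \<Rightarrow> eps | Some (a, y) \<Rightarrow> wapp [a] (trace_word y \<omega>))"

definition trace_measure :: "'x \<Rightarrow> (nat \<Rightarrow> 'a option) measure" where
  "trace_measure x = distr runs Ainf (trace_word x)"

definition sem :: "('x \<Rightarrow> real) \<Rightarrow> (nat \<Rightarrow> 'a option) measure" where
  "sem u = density (count_space UNIV) (\<lambda>x. ennreal (u x)) \<bind> trace_measure"

lemma pmf_step [simp]: "pmf (step x) z = \<alpha> x z"
proof -
  have "(\<integral>\<^sup>+z. ennreal (\<alpha> x z) \<partial>count_space UNIV) = (\<Sum>z\<in>supp (\<alpha> x). ennreal (\<alpha> x z))"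
    by (rule nn_integral_count_space') (auto simp: finite_supp_transition)
  also have "\<dots> = 1"
    using sum_transition[of x] transition_nonneg by (simp add: sum_ennreal)
  finally show ?thesis
    unfolding step_def by (intro pmf_embed_pmf) (auto simp: transition_nonneg)
qed

lemma set_pmf_step [simp]: "set_pmf (step x) = supp (\<alpha> x)"
  by (auto simp: set_pmf_eq)

lemma choice_in_supp: "choice x z \<in> supp (\<alpha> x)"
proof -
  obtain z0 where "z0 \<in> supp (\<alpha> x)" using sum_transition[of x] by force
  then show ?thesis
    using someI[of "\<lambda>z. z \<in> supp (\<alpha> x)" z0] unfolding choice_def by auto
qed

lemma prob_space_runs: "prob_space runs"
  unfolding runs_def choices_def
  by (intro prob_space.prob_space_stream_space prob_space_PiM prob_space_measure_pmf)

lemma trace_letter_None: "trace_letter n x \<omega> = None \<Longrightarrow> trace_letter (Suc n) x \<omega> = None"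
proof (induction n arbitrary: x \<omega>)
  case (Suc n)
  then show ?case by (cases "choice x (shd \<omega> x)") auto
qed (auto split: option.splits)

lemma trace_word_in_winf: "trace_word x \<omega> \<in> winf"
  unfolding winf_def trace_word_def by (blast intro: trace_letter_None)

lemma trace_word_SCons: "trace_word x (f ## \<omega>) = continuation (choice x (f x)) \<omega>"
proof
  fix n show "trace_word x (f ## \<omega>) n = continuation (choice x (f x)) \<omega> n"
    by (cases n)
      (auto simp: trace_word_def continuation_def eps_def of_list_def wapp_def split: option.splits)
qed

lemma measurable_choice_shd:
  "(\<lambda>\<omega>. choice x (shd \<omega> x)) \<in> measurable runs (count_space (supp (\<alpha> x)))"
proof -
  have "(\<lambda>\<omega>. shd \<omega> x) \<in> measurable runs (measure_pmf (step x))"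
    unfolding runs_def choices_def
    by (rule measurable_compose[OF measurable_shd measurable_component_singleton]) simp
  then have "(\<lambda>\<omega>. choice x (shd \<omega> x)) \<in> measurable runs (count_space UNIV)"
    by (rule measurable_compose) simp
  from measurable_sets[OF this, of "{z}" for z] show ?thesis
    by (subst measurable_count_space_eq2) (auto simp: finite_supp_transition choice_in_supp[simplified])
qed

lemma measurable_trace_letter: "(\<lambda>\<omega>. trace_letter n x \<omega>) \<in> measurable runs (count_space UNIV)"
proof (induction n arbitrary: x)
  case 0
  show ?case
    by (simp, rule measurable_compose[OF measurable_choice_shd]) simp
next
  case (Suc n)
  have "(\<lambda>\<omega>. case z of None \<Rightarrow> None | Some (a, y) \<Rightarrow> trace_letter n y (stl \<omega>))
      \<in> measurable runs (count_space UNIV)" for z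
  proof (cases z)
    case (Some p)
    have "(\<lambda>\<omega>. trace_letter n y (stl \<omega>)) \<in> measurable runs (count_space UNIV)" for y
      by (rule measurable_compose[OF _ Suc.IH]) (simp add: runs_def)
    then show ?thesis by (simp add: Some split: prod.split)
  qed simp
  then have "(\<lambda>\<omega>. (\<lambda>z \<omega>. case z of None \<Rightarrow> None | Some (a, y) \<Rightarrow> trace_letter n y (stl \<omega>))
      (choice x (shd \<omega> x)) \<omega>) \<in> measurable runs (count_space UNIV)"
    by (rule measurable_compose_countable'[OF _ measurable_choice_shd])
      (auto simp: finite_supp_transition countable_finite)
  then show ?case by simp
qed

lemma measurable_trace_word: "trace_word x \<in> measurable runs Ainf"
  unfolding Ainf_def
proof (rule measurable_measure_of[OF wgen_subset_Pow])
  have "{\<omega>\<in>space runs. trace_letter i x \<omega> = c} \<in> sets runs" for i c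
    using measurable_sets[OF measurable_trace_letter, of "{c}" i x]
    by (simp add: vimage_def Int_def conj_commute)
  then have letters: "{\<omega>\<in>space runs. \<forall>i\<in>I. trace_word x \<omega> i = f i} \<in> sets runs"
    if "finite I" for I f
    using that by (intro sets.sets_Collect_finite_All) (simp_all add: trace_word_def)
  fix G :: "(nat \<Rightarrow> 'a option) set" assume "G \<in> wgen"
  then show "trace_word x -` G \<inter> space runs \<in> sets runs"
  proof (cases rule: wgenE)
    case (2 w)
    have "trace_word x -` G \<inter> space runs =
        {\<omega>\<in>space runs. \<forall>i\<in>{..length w}. trace_word x \<omega> i = of_list w i}"
      by (auto simp: 2 eq_of_list_iff[OF trace_word_in_winf])
    then show ?thesis using letters by simp
  next
    case (3 w)
    have "trace_word x -` G \<inter> space runs =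
        {\<omega>\<in>space runs. \<forall>i\<in>{..<length w}. trace_word x \<omega> i = Some (w ! i)}"
      by (simp add: 3 set_eq_iff in_cylinder_iff[OF trace_word_in_winf] Ball_def) blast
    then show ?thesis using letters by simp
  qed simp
qed (use trace_word_in_winf in auto)

lemma sets_trace_measure [simp]: "sets (trace_measure x) = sets Ainf"
  by (simp add: trace_measure_def)

lemma space_trace_measure [simp]: "space (trace_measure x) = winf"
  using sets_eq_imp_space_eq[OF sets_trace_measure] by simp

lemma prob_space_trace_measure: "prob_space (trace_measure x)"
  unfolding trace_measure_def
  by (rule prob_space.prob_space_distr[OF prob_space_runs measurable_trace_word])

lemma emeasure_trace_measure: "S \<in> sets Ainf \<Longrightarrow>
    emeasure (trace_measure x) S = emeasure runs (trace_word x -` S \<inter> space runs)"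
  unfolding trace_measure_def by (rule emeasure_distr[OF measurable_trace_word])

lemma emeasure_trace_measure_first_step:
  assumes B: "B \<in> sets Ainf"
  shows "emeasure (trace_measure x) B =
    (\<Sum>z\<in>supp (\<alpha> x). ennreal (\<alpha> x z) * emeasure runs (continuation z -` B \<inter> space runs))"
proof -
  have "emeasure (trace_measure x) B = emeasure runs (trace_word x -` B \<inter> space runs)"
    by (rule emeasure_trace_measure[OF B])
  also have "\<dots> = (\<integral>\<^sup>+t. emeasure runs {\<omega>\<in>space runs. t ## \<omega> \<in> trace_word x -` B \<inter> space runs}
      \<partial>choices)"
    using measurable_sets[OF measurable_trace_word B] unfolding runs_def choices_def
    by (intro prob_space.emeasure_stream_space prob_space_PiM prob_space_measure_pmf) simp
  also have "\<dots> = (\<integral>\<^sup>+t. emeasure runs (continuation (choice x (t x)) -` B \<inter> space runs) \<partial>choices)"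
    by (intro nn_integral_cong arg_cong[where f = "emeasure runs"])
      (auto simp: runs_def space_stream_space trace_word_SCons)
  also have "\<dots> = (\<integral>\<^sup>+z. emeasure runs (continuation (choice x z) -` B \<inter> space runs)
      \<partial>distr choices (measure_pmf (step x)) (\<lambda>t. t x))"
    by (subst nn_integral_distr) (auto simp: choices_def)
  also have "distr choices (measure_pmf (step x)) (\<lambda>t. t x) = measure_pmf (step x)"
    unfolding choices_def by (rule distr_PiM_component) (auto intro: prob_space_measure_pmf)
  also have "(\<integral>\<^sup>+z. emeasure runs (continuation (choice x z) -` B \<inter> space runs) \<partial>measure_pmf (step x))
      = (\<Sum>z\<in>supp (\<alpha> x). emeasure runs (continuation (choice x z) -` B \<inter> space runs) * \<alpha> x z)"
    by (subst nn_integral_measure_pmf_support[where A = "supp (\<alpha> x)"])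
      (auto simp: finite_supp_transition)
  finally show ?thesis
    by (simp add: choice_def mult.commute)
qed

lemma emeasure_trace_measure_eps: "emeasure (trace_measure x) {eps} = ennreal (\<alpha> x None)"
proof -
  have "ennreal (\<alpha> x z) * emeasure runs (continuation z -` {eps} \<inter> space runs) =
      (if z = None then ennreal (\<alpha> x z) else 0)" for z
    using prob_space.emeasure_space_1[OF prob_space_runs]
    by (cases z) (auto simp: continuation_def vimage_def wapp_single_neq_eps)
  then show ?thesis
    by (simp add: emeasure_trace_measure_first_step[OF eps_in_sets] finite_supp_transition)
qed

lemma emeasure_trace_measure_wapp_single:
  assumes S: "S \<in> sets Ainf" and V: "finite V" and succ: "(\<lambda>y. Some (a, y)) -` supp (\<alpha> x) \<subseteq> V"
  shows "emeasure (trace_measure x) (wapp [a] ` S) =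
    (\<Sum>y\<in>V. ennreal (\<alpha> x (Some (a, y))) * emeasure (trace_measure y) S)"
proof -
  define g where "g z = ennreal (\<alpha> x z) *
    (case z of Some (b, y) \<Rightarrow> if b = a then emeasure (trace_measure y) S else 0 | None \<Rightarrow> 0)" for z
  let ?I = "(\<lambda>y. Some (a, y)) ` V"
  have "emeasure runs (continuation z -` (wapp [a] ` S) \<inter> space runs) =
      (case z of Some (b, y) \<Rightarrow> if b = a then emeasure (trace_measure y) S else 0 | None \<Rightarrow> 0)" for z
  proof (cases z)
    case None
    have "eps \<notin> wapp [a] ` S" using wapp_single_neq_eps by (metis imageE)
    then show ?thesis by (simp add: None continuation_def vimage_def)
  next
    case (Some p)
    then obtain b y where z: "z = Some (b, y)" by (cases p) auto
    have "continuation z -` (wapp [a] ` S) \<inter> space runs =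
        (if b = a then trace_word y -` S \<inter> space runs else {})"
      by (auto simp: z continuation_def vimage_def wapp_single_in_image_iff)
    then show ?thesis by (simp add: z emeasure_trace_measure[OF S])
  qed
  then have "emeasure (trace_measure x) (wapp [a] ` S) = sum g (supp (\<alpha> x))"
    unfolding g_def emeasure_trace_measure_first_step[OF wapp_single_image_in_sets[OF S]] by simp
  also have "\<dots> = sum g (supp (\<alpha> x) \<union> ?I)"
    by (rule sum.mono_neutral_left) (auto simp: V finite_supp_transition g_def)
  also have "\<dots> = sum g ?I"
    using succ by (intro sum.mono_neutral_right)
      (auto simp: V finite_supp_transition g_def split: option.split)
  also have "\<dots> = (\<Sum>y\<in>V. ennreal (\<alpha> x (Some (a, y))) * emeasure (trace_measure y) S)"
    by (subst sum.reindex) (auto simp: inj_on_def g_def)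
  finally show ?thesis .
qed

lemma sets_sem [simp]: "sets (sem u) = sets Ainf"
  unfolding sem_def by (rule sets_bind) auto

lemma space_sem [simp]: "space (sem u) = winf"
  using sets_eq_imp_space_eq[OF sets_sem] by simp

lemma emeasure_sem:
  assumes u: "finite (supp u)" and S: "S \<in> sets Ainf"
  shows "emeasure (sem u) S = (\<Sum>x\<in>supp u. ennreal (u x) * emeasure (trace_measure x) S)"
proof -
  have meas: "trace_measure \<in> measurable (density (count_space UNIV) (\<lambda>x. ennreal (u x))) (subprob_algebra Ainf)"
    using prob_space_trace_measure
    by (auto simp: space_subprob_algebra prob_space_imp_subprob_space)
  have "emeasure (sem u) S =
      (\<integral>\<^sup>+x. emeasure (trace_measure x) S \<partial>density (count_space UNIV) (\<lambda>x. ennreal (u x)))"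
    unfolding sem_def by (rule emeasure_bind[OF _ meas S]) simp
  also have "\<dots> = (\<integral>\<^sup>+x. ennreal (u x) * emeasure (trace_measure x) S \<partial>count_space UNIV)"
    by (rule nn_integral_density) auto
  also have "\<dots> = (\<Sum>x\<in>supp u. ennreal (u x) * emeasure (trace_measure x) S)"
    by (rule nn_integral_count_space'[OF u]) auto
  finally show ?thesis .
qed

lemma emeasure_sem_point_mass:
  "S \<in> sets Ainf \<Longrightarrow> emeasure (sem (point_mass x)) S = emeasure (trace_measure x) S"
proof -
  have "supp (point_mass x) = {x}" by (auto simp: supp_def point_mass_def)
  then show "S \<in> sets Ainf \<Longrightarrow> ?thesis" by (simp add: emeasure_sem point_mass_def)
qed

lemma emeasure_sem_wapp_single:
  assumes u: "u \<in> DD" and S: "S \<in> sets Ainf"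
  shows "emeasure (sem u) (wapp [a] ` S) = emeasure (sem (tau \<alpha> a u)) S"
proof -
  have fin: "finite (successors a u)" by (rule finite_successors[OF DD_finite_supp[OF u]])
  have "emeasure (sem u) (wapp [a] ` S) =
      (\<Sum>x\<in>supp u. ennreal (u x) * emeasure (trace_measure x) (wapp [a] ` S))"
    by (rule emeasure_sem[OF DD_finite_supp[OF u] wapp_single_image_in_sets[OF S]])
  also have "\<dots> = (\<Sum>x\<in>supp u. \<Sum>y\<in>successors a u.
      ennreal (u x) * ennreal (\<alpha> x (Some (a, y))) * emeasure (trace_measure y) S)"
  proof (intro sum.cong refl)
    fix x assume "x \<in> supp u"
    then have "(\<lambda>y. Some (a, y)) -` supp (\<alpha> x) \<subseteq> successors a u"
      by (auto simp: successors_def)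
    then show "ennreal (u x) * emeasure (trace_measure x) (wapp [a] ` S) = (\<Sum>y\<in>successors a u.
        ennreal (u x) * ennreal (\<alpha> x (Some (a, y))) * emeasure (trace_measure y) S)"
      by (simp add: emeasure_trace_measure_wapp_single[OF S fin] sum_distrib_left mult.assoc)
  qed
  also have "\<dots> = (\<Sum>y\<in>successors a u. ennreal (tau \<alpha> a u y) * emeasure (trace_measure y) S)"
    by (subst sum.swap) (simp add: ennreal_tau[OF u] sum_distrib_right)
  also have "\<dots> = (\<Sum>y\<in>supp (tau \<alpha> a u). ennreal (tau \<alpha> a u y) * emeasure (trace_measure y) S)"
    by (rule sum.mono_neutral_right) (use fin supp_tau_subset in auto)
  also have "\<dots> = emeasure (sem (tau \<alpha> a u)) S"
    by (rule emeasure_sem[OF DD_finite_supp[OF tau_DD[OF u]] S, symmetric])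
  finally show ?thesis .
qed

lemma is_morph_sem: "is_morph \<alpha> sem"
  unfolding is_morph_def
proof (intro ballI conjI allI)
  fix u :: "'x \<Rightarrow> real" assume u: "u \<in> DD"
  have total: "emeasure (sem u) winf = ennreal (sum u (supp u))"
    using prob_space.emeasure_space_1[OF prob_space_trace_measure] DD_nonneg[OF u]
    by (simp add: emeasure_sem[OF DD_finite_supp[OF u] winf_in_sets] sum_ennreal)
  then show "emeasure (sem u) winf = ennreal (alpha1 \<alpha> u)"
    by (simp add: alpha1_def sum_transition)
  show "sem u \<in> Msub"
    unfolding Msub_def
  proof (intro CollectI conjI)
    have "winf \<noteq> {}" using of_list_in_winf by blast
    then show "subprob_space (sem u)"
      using total DD_sum_le_1[OF u] by (intro subprob_spaceI) auto
  qed simp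
  show "emeasure (sem u) {eps} = ennreal (alphastar \<alpha> u)"
    using u unfolding alphastar_def
    by (simp add: emeasure_sem[OF DD_finite_supp[OF u] eps_in_sets] emeasure_trace_measure_eps
        ennreal_mult DD_nonneg transition_nonneg flip: sum_ennreal)
  show "emeasure (sem u) (wapp [a] ` S) = emeasure (sem (tau \<alpha> a u)) S" if "S \<in> sets Ainf" for a S
    by (rule emeasure_sem_wapp_single[OF u that])
qed

end

theorem mainTheorem14:
  fixes \<alpha> :: "'x \<Rightarrow> ('a::finite \<times> 'x) option \<Rightarrow> real"
  assumes "\<forall>x. \<alpha> x \<in> PD"
  shows "\<exists>sem. is_morph \<alpha> sem
           \<and> (\<forall>sem'. is_morph \<alpha> sem' \<longrightarrow> (\<forall>u\<in>DD. sem' u = sem u))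
           \<and> (\<forall>u\<in>DD. \<forall>S\<in>sets Ainf.
                emeasure (sem u) S = (\<Sum>x\<in>supp u. ennreal (u x) * emeasure (sem (point_mass x)) S))"
proof -
  interpret prob_transition_system \<alpha>
    using assms by unfold_locales simp
  show ?thesis
  proof (intro exI conjI allI impI ballI)
    show "is_morph \<alpha> sem" by (rule is_morph_sem)
    show "sem' u = sem u" if "is_morph \<alpha> sem'" "u \<in> DD" for sem' u
      using morphism_unique[OF that(1) is_morph_sem that(2)] .
    show "emeasure (sem u) S = (\<Sum>x\<in>supp u. ennreal (u x) * emeasure (sem (point_mass x)) S)"
      if "u \<in> DD" "S \<in> sets Ainf" for u S
      using that by (simp add: emeasure_sem DD_finite_supp emeasure_sem_point_mass)
  qed
qed

end
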